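(* Let $x,v$ be positive integers with $xv\ge3$, and let $\lambda=(x,x,\dots,x)$ consist of $v$ copies of $x$ (so $n=vx$). Then $P(\lambda)\setminus\{0\}$ is isomorphic to the poset whose elements are \[ \{(r,p)\in\mathbb{Z}^2:0\le r<x,\ 0\le p<v\}\setminus\{(0,0),(x-1,v-1)\}, \] with strict order relation $(r,p)\prec(r',p')$ if and only if both $p>p'$ and $r'>r$.
   Context: For a vector $\lambda=(\lambda_1,\dots,\lambda_d)$ of positive integers with sum $n\ge2$, $\Delta_\lambda=\mathrm{conv}(e_1,\dots,e_d,\lambda)\subset\mathbb{R}^d$ has fundamental parallelepiped $\Pi_\lambda=\{\sum_{i=1}^d\gamma_i(1,e_i)+\gamma_{d+1}(1,\lambda):0\le\gamma_i<1\}\subset\mathbb{R}^{d+1}$. $P(\lambda)$ is $\Pi_\lambda\cap\mathbb{Z}^{d+1}$ ordered by $\sigma\preceq\mu$ iff $\mu-\sigma\in\Pi_\lambda\cap\mathbb{Z}^{d+1}$; the origin $0$ is its minimum. *)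

theory Defs
  imports Complex_Main
begin

text \<open>Points of Z^(d+1) are encoded as functions nat => int, with coordinates
  indexed 0..d and value 0 outside {0..d}.  The vector lambda = (lambda_1,...,lambda_d)
  is a function nat => int, only its values at 1..d matter.
  The generators of the parallelepiped are (1,e_i) for i = 1..d and (1,lambda);
  coordinate 0 is the leading "1" coordinate.\<close>

definition in_Pi :: "nat \<Rightarrow> (nat \<Rightarrow> int) \<Rightarrow> (nat \<Rightarrow> int) \<Rightarrow> bool" where
  "in_Pi d lam z \<longleftrightarrow>
     (\<forall>j>d. z j = 0) \<and>
     (\<exists>\<gamma>::nat \<Rightarrow> real.
        (\<forall>i\<in>{1..d+1}. 0 \<le> \<gamma> i \<and> \<gamma> i < 1) \<and>
        real_of_int (z 0) = (\<Sum>i=1..d+1. \<gamma> i) \<and>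
        (\<forall>j\<in>{1..d}. real_of_int (z j) = \<gamma> j + \<gamma> (d+1) * real_of_int (lam j)))"

definition P_lambda :: "nat \<Rightarrow> (nat \<Rightarrow> int) \<Rightarrow> (nat \<Rightarrow> int) set" where
  "P_lambda d lam = {z. in_Pi d lam z}"

definition P_le :: "nat \<Rightarrow> (nat \<Rightarrow> int) \<Rightarrow> (nat \<Rightarrow> int) \<Rightarrow> (nat \<Rightarrow> int) \<Rightarrow> bool" where
  "P_le d lam \<sigma> \<mu> \<longleftrightarrow> \<sigma> \<in> P_lambda d lam \<and> \<mu> \<in> P_lambda d lam \<and>
       (\<lambda>j. \<mu> j - \<sigma> j) \<in> P_lambda d lam"

definition Q_set :: "nat \<Rightarrow> nat \<Rightarrow> (int \<times> int) set" where
  "Q_set x v = {(r,p). 0 \<le> r \<and> r < int x \<and> 0 \<le> p \<and> p < int v}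
                - {(0,0), (int x - 1, int v - 1)}"

definition Q_less :: "int \<times> int \<Rightarrow> int \<times> int \<Rightarrow> bool" where
  "Q_less a b \<longleftrightarrow> snd a > snd b \<and> fst b > fst a"

end

theory Submission
  imports Defs
begin

text \<open>For \<lambda> = (x, \<dots>, x) the coefficients of (1, e_1), \<dots>, (1, e_v) in a lattice point of the
  parallelepiped must all agree, say with t, so the point is (h, c, \<dots>, c) with c = t + g x and
  h = v t + g, where g is the coefficient of (1, \<lambda>).  Solving, (x v - 1) g = v c - h and
  (x v - 1) t = x h - c, so the lattice points correspond to the integer pairs (c, h) with v c - h
  and x h - c in [0, x v - 2].  These are (0, 0) together with the box 1 \<le> c \<le> x, 1 \<le> h \<le> v
  minus its corners (1, v) and (x, 1); the map (c, h) \<mapsto> (c - 1, v - h) sends them onto Q, and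
  since the order of P(\<lambda>) is defined through differences, which again have this form, it
  becomes the stated order on Q.\<close>

lemma ex_rel_iso_inverse:
  assumes g: "bij_betw g A B" and rel: "\<And>a b. a \<in> A \<Longrightarrow> b \<in> A \<Longrightarrow> R (g a) (g b) \<longleftrightarrow> S a b"
  shows "\<exists>f. bij_betw f B A \<and> (\<forall>x\<in>B. \<forall>y\<in>B. R x y \<longleftrightarrow> S (f x) (f y))"
proof (intro exI conjI ballI)
  show "bij_betw (inv_into A g) B A" using g by (rule bij_betw_inv_into)
  fix x y assume "x \<in> B" "y \<in> B"
  then have "inv_into A g x \<in> A" "inv_into A g y \<in> A"
    and "g (inv_into A g x) = x" "g (inv_into A g y) = y"
    using g by (auto intro: bij_betw_apply[OF bij_betw_inv_into] bij_betw_inv_into_right)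
  with rel show "R x y \<longleftrightarrow> S (inv_into A g x) (inv_into A g y)" by metis
qed

lemma ex_unit_interval_mult_iff:
  fixes m N :: int
  assumes "N > 0"
  shows "(\<exists>g::real. 0 \<le> g \<and> g < 1 \<and> m = g * N) \<longleftrightarrow> 0 \<le> m \<and> m < N"
proof
  assume "\<exists>g::real. 0 \<le> g \<and> g < 1 \<and> m = g * N"
  then obtain g :: real where "0 \<le> g" "g < 1" "m = g * N" by blast
  with assms have "0 \<le> real_of_int m" "real_of_int m < N"
    by (simp_all add: mult_less_cancel_right2)
  then show "0 \<le> m \<and> m < N" by simp
next
  assume "0 \<le> m \<and> m < N"
  with assms show "\<exists>g::real. 0 \<le> g \<and> g < 1 \<and> m = g * N"
    by (intro exI[of _ "m / N"]) simp
qed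

definition diag_point :: "nat \<Rightarrow> int \<Rightarrow> int \<Rightarrow> nat \<Rightarrow> int" where
  "diag_point d c h = (\<lambda>j. if j = 0 then h else if j \<le> d then c else 0)"

lemma diag_point_eq_iff:
  assumes "d \<ge> 1"
  shows "diag_point d c h = diag_point d c' h' \<longleftrightarrow> c = c' \<and> h = h'"
  using assms by (auto simp: diag_point_def fun_eq_iff dest: spec[of _ 0] spec[of _ 1])

lemma diag_point_zero: "diag_point d 0 0 = (\<lambda>_. 0)"
  by (simp add: diag_point_def fun_eq_iff)

lemma diag_point_diff:
  "(\<lambda>j. diag_point d c h j - diag_point d c' h' j) = diag_point d (c - c') (h - h')"
  by (simp add: diag_point_def fun_eq_iff)

lemma in_Pi_const_iff:
  assumes "d \<ge> 1"
  shows "in_Pi d (\<lambda>_. l) z \<longleftrightarrow>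
    (\<exists>c h. z = diag_point d c h \<and>
       (\<exists>(g::real) (t::real). 0 \<le> g \<and> g < 1 \<and> 0 \<le> t \<and> t < 1 \<and> c = t + g * l \<and> h = d * t + g))"
proof
  assume "in_Pi d (\<lambda>_. l) z"
  then obtain \<gamma> :: "nat \<Rightarrow> real" where supp: "\<forall>j>d. z j = 0"
    and \<gamma>_bounds: "\<forall>i\<in>{1..d+1}. 0 \<le> \<gamma> i \<and> \<gamma> i < 1"
    and height: "z 0 = (\<Sum>i=1..d+1. \<gamma> i)"
    and coords: "\<forall>j\<in>{1..d}. z j = \<gamma> j + \<gamma> (d+1) * l"
    unfolding in_Pi_def by auto
  define g where "g = \<gamma> (d+1)"
  define t where "t = \<gamma> 1"
  have z_const: "z j = z 1" and \<gamma>_const: "\<gamma> j = t" if "j \<in> {1..d}" for j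
  proof -
    have zj: "z j = \<gamma> j + g * l" and z1: "z 1 = \<gamma> 1 + g * l"
      using coords that assms by (auto simp: g_def)
    moreover have "0 \<le> \<gamma> j" "\<gamma> j < 1" "0 \<le> \<gamma> 1" "\<gamma> 1 < 1"
      using \<gamma>_bounds that assms by auto
    ultimately have "\<bar>real_of_int (z j - z 1)\<bar> < 1" by simp
    then have "z j = z 1" by linarith
    with zj z1 show "z j = z 1" "\<gamma> j = t" by (simp_all add: t_def)
  qed
  have "z j = diag_point d (z 1) (z 0) j" for j
    using z_const[of j] supp by (auto simp: diag_point_def)
  then have "z = diag_point d (z 1) (z 0)" ..
  moreover have "z 1 = t + g * l"
    using coords assms by (simp add: t_def g_def)
  moreover have "(\<Sum>i=1..d. \<gamma> i) = d * t"
    using \<gamma>_const by simp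
  then have "z 0 = d * t + g"
    using height by (simp add: g_def)
  moreover have "0 \<le> g" "g < 1" "0 \<le> t" "t < 1"
    using \<gamma>_bounds assms by (auto simp: g_def t_def)
  ultimately show "\<exists>c h. z = diag_point d c h \<and>
       (\<exists>(g::real) (t::real). 0 \<le> g \<and> g < 1 \<and> 0 \<le> t \<and> t < 1 \<and> c = t + g * l \<and> h = d * t + g)"
    by blast
next
  assume "\<exists>c h. z = diag_point d c h \<and>
       (\<exists>(g::real) (t::real). 0 \<le> g \<and> g < 1 \<and> 0 \<le> t \<and> t < 1 \<and> c = t + g * l \<and> h = d * t + g)"
  then obtain c h and g t :: real where z: "z = diag_point d c h"
    and "0 \<le> g" "g < 1" "0 \<le> t" "t < 1" "c = t + g * l" "h = d * t + g"
    by blast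
  then show "in_Pi d (\<lambda>_. l) z"
    unfolding in_Pi_def
    by (intro conjI exI[of _ "\<lambda>i. if i = d + 1 then g else t"]) (auto simp: diag_point_def)
qed

lemma ex_frac_coords_iff:
  fixes X V c h :: int
  assumes "X * V \<ge> 2"
  shows "(\<exists>(g::real) (t::real). 0 \<le> g \<and> g < 1 \<and> 0 \<le> t \<and> t < 1 \<and> c = t + g * X \<and> h = V * t + g)
    \<longleftrightarrow> 0 \<le> V * c - h \<and> V * c - h < X * V - 1 \<and> 0 \<le> X * h - c \<and> X * h - c < X * V - 1"
proof -
  define N where "N = X * V - 1"
  have N: "N > 0" using assms by (simp add: N_def)
  have solve: "c = t + g * X \<and> h = V * t + g \<longleftrightarrow>
      real_of_int (V * c - h) = g * N \<and> real_of_int (X * h - c) = t * N" for g t :: real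
  proof
    assume "c = t + g * X \<and> h = V * t + g"
    then show "real_of_int (V * c - h) = g * N \<and> real_of_int (X * h - c) = t * N"
      by (simp add: N_def algebra_simps)
  next
    assume eqs: "real_of_int (V * c - h) = g * N \<and> real_of_int (X * h - c) = t * N"
    have "real_of_int N * (t + g * X) = real_of_int (X * h - c) + X * real_of_int (V * c - h)"
      using eqs by (simp add: algebra_simps)
    also have "\<dots> = real_of_int N * c" by (simp add: N_def algebra_simps)
    finally have c_eq: "real_of_int N * (t + g * X) = real_of_int N * c" .
    have "real_of_int N * (V * t + g) = V * real_of_int (X * h - c) + real_of_int (V * c - h)"
      using eqs by (simp add: algebra_simps)
    also have "\<dots> = real_of_int N * h" by (simp add: N_def algebra_simps)
    finally have "real_of_int N * (V * t + g) = real_of_int N * h" .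
    with c_eq N show "c = t + g * X \<and> h = V * t + g" by auto
  qed
  have "(\<exists>(g::real) (t::real). 0 \<le> g \<and> g < 1 \<and> 0 \<le> t \<and> t < 1 \<and> c = t + g * X \<and> h = V * t + g)
    \<longleftrightarrow> (\<exists>g::real. 0 \<le> g \<and> g < 1 \<and> V * c - h = g * N) \<and> (\<exists>t::real. 0 \<le> t \<and> t < 1 \<and> X * h - c = t * N)"
    unfolding solve by blast
  then show ?thesis
    unfolding ex_unit_interval_mult_iff[OF N] by (simp add: N_def)
qed

lemma parallelepiped_bounds_iff_Q_set:
  fixes x v :: nat and c h :: int
  assumes "x * v \<ge> 2"
  shows "(0 \<le> int v * c - h \<and> int v * c - h < int x * int v - 1 \<and>
          0 \<le> int x * h - c \<and> int x * h - c < int x * int v - 1)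
    \<longleftrightarrow> (c, h) = (0, 0) \<or> (c - 1, v - h) \<in> Q_set x v"
proof -
  define X V where "X = int x" and "V = int v"
  define N where "N = X * V - 1"
  have N: "N > 0" and X: "X \<ge> 1" and V: "V \<ge> 1"
  proof -
    have "x \<noteq> 0" "v \<noteq> 0" using assms by (intro notI; simp)+
    then show "N > 0" "X \<ge> 1" "V \<ge> 1"
      using assms by (simp_all add: N_def X_def V_def flip: of_nat_mult)
  qed
  show ?thesis
  proof
    assume "0 \<le> int v * c - h \<and> int v * c - h < int x * int v - 1 \<and>
      0 \<le> int x * h - c \<and> int x * h - c < int x * int v - 1"
    then obtain a b where a_eq: "a = V * c - h" and a: "0 \<le> a" "a < N"
      and b_eq: "b = X * h - c" and b: "0 \<le> b" "b < N"
      by (auto simp: X_def V_def N_def)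
    have Nc: "N * c = X * a + b" and Nh: "N * h = a + V * b"
      by (simp_all add: a_eq b_eq N_def algebra_simps)
    have "N * c \<ge> 0" "N * h \<ge> 0" using Nc Nh a b X V by simp_all
    then have "c \<ge> 0" "h \<ge> 0" using N by (simp_all add: zero_le_mult_iff)
    have "N * c < N * (X + 1)"
    proof -
      have "X * a \<le> X * (N - 1)" using a X by (intro mult_left_mono) auto
      then show ?thesis unfolding Nc using b X by (simp add: algebra_simps)
    qed
    then have "c \<le> X" using N by simp
    have "N * h < N * (V + 1)"
    proof -
      have "V * b \<le> V * (N - 1)" using b V by (intro mult_left_mono) auto
      then show ?thesis unfolding Nh using a V by (simp add: algebra_simps)
    qed
    then have "h \<le> V" using N by simp
    have "c = 0 \<longleftrightarrow> h = 0"
    proof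
      assume "c = 0"
      then have "X * a + b = 0" using Nc by simp
      moreover have "X * a \<ge> 0" using a X by simp
      ultimately have "X * a = 0" "b = 0" using b by linarith+
      then have "a = 0 \<and> b = 0" using X by simp
      then show "h = 0" using Nh N by simp
    next
      assume "h = 0"
      then have "a + V * b = 0" using Nh by simp
      moreover have "V * b \<ge> 0" using b V by simp
      ultimately have "a = 0" "V * b = 0" using a by linarith+
      then have "a = 0 \<and> b = 0" using V by simp
      then show "c = 0" using Nc N by simp
    qed
    moreover have "\<not> (c = 1 \<and> h = V)" using b b_eq by (auto simp: N_def algebra_simps)
    moreover have "\<not> (c = X \<and> h = 1)" using a a_eq by (auto simp: N_def algebra_simps)
    ultimately show "(c, h) = (0, 0) \<or> (c - 1, v - h) \<in> Q_set x v"
      using \<open>c \<ge> 0\<close> \<open>h \<ge> 0\<close> \<open>c \<le> X\<close> \<open>h \<le> V\<close>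
      by (auto simp: Q_set_def X_def V_def)
  next
    assume "(c, h) = (0, 0) \<or> (c - 1, v - h) \<in> Q_set x v"
    then consider "c = 0" "h = 0"
      | "1 \<le> c" "c \<le> X" "1 \<le> h" "h \<le> V" "\<not> (c = 1 \<and> h = V)" "\<not> (c = X \<and> h = 1)"
      by (auto simp: Q_set_def X_def V_def)
    then show "0 \<le> int v * c - h \<and> int v * c - h < int x * int v - 1 \<and>
      0 \<le> int x * h - c \<and> int x * h - c < int x * int v - 1"
    proof cases
      case 1
      then show ?thesis using N by (simp add: N_def X_def V_def)
    next
      case 2
      have "V * 1 \<le> V * c" "X * 1 \<le> X * h" using 2 X V by (intro mult_left_mono; simp)+
      then have "0 \<le> V * c - h" "0 \<le> X * h - c" using 2 by linarith+
      moreover have "V * c - h < X * V - 1"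
      proof (cases "c = X")
        case False
        then have "V * c \<le> V * (X - 1)" using 2 V by (intro mult_left_mono) auto
        then show ?thesis using 2 by (simp add: algebra_simps)
      qed (use 2 in \<open>auto simp: algebra_simps\<close>)
      moreover have "X * h - c < X * V - 1"
      proof (cases "h = V")
        case False
        then have "X * h \<le> X * (V - 1)" using 2 X by (intro mult_left_mono) auto
        then show ?thesis using 2 by (simp add: algebra_simps)
      qed (use 2 in \<open>auto simp: algebra_simps\<close>)
      ultimately show ?thesis by (simp add: X_def V_def)
    qed
  qed
qed

lemma mem_P_lambda_const_iff:
  assumes "x * v \<ge> 2"
  shows "z \<in> P_lambda v (\<lambda>_. int x) \<longleftrightarrow>
    (\<exists>c h. z = diag_point v c h \<and> ((c, h) = (0, 0) \<or> (c - 1, int v - h) \<in> Q_set x v))"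
proof -
  have "v \<ge> 1" using assms by (intro leI notI) simp
  have "int x * int v \<ge> 2" using assms by (simp flip: of_nat_mult)
  note frac = ex_frac_coords_iff[OF this]
  show ?thesis
    unfolding P_lambda_def mem_Collect_eq in_Pi_const_iff[OF \<open>v \<ge> 1\<close>]
    using frac parallelepiped_bounds_iff_Q_set[OF assms] by simp
qed

lemma diag_point_mem_P_lambda_iff:
  assumes "x * v \<ge> 2"
  shows "diag_point v c h \<in> P_lambda v (\<lambda>_. int x) \<longleftrightarrow>
    (c, h) = (0, 0) \<or> (c - 1, int v - h) \<in> Q_set x v"
proof -
  have "v \<ge> 1" using assms by (intro leI notI) simp
  then show ?thesis
    unfolding mem_P_lambda_const_iff[OF assms] by (simp add: diag_point_eq_iff)
qed

definition Q_point :: "nat \<Rightarrow> int \<times> int \<Rightarrow> nat \<Rightarrow> int" where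
  "Q_point v = (\<lambda>(r, p). diag_point v (r + 1) (int v - p))"

lemma inj_Q_point:
  assumes "v \<ge> 1"
  shows "inj (Q_point v)"
  using assms by (intro injI) (auto simp: Q_point_def diag_point_eq_iff split: prod.splits)

lemma P_lambda_const_minus_zero:
  assumes "x * v \<ge> 2"
  shows "P_lambda v (\<lambda>_. int x) - {\<lambda>_. 0} = Q_point v ` Q_set x v"
proof -
  have "v \<ge> 1" using assms by (intro leI notI) simp
  show ?thesis
  proof (intro equalityI subsetI)
    fix z assume "z \<in> P_lambda v (\<lambda>_. int x) - {\<lambda>_. 0}"
    then obtain c h where "z = diag_point v c h" "(c - 1, int v - h) \<in> Q_set x v"
      using mem_P_lambda_const_iff[OF assms] diag_point_zero by fastforce
    then show "z \<in> Q_point v ` Q_set x v"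
      by (auto simp: Q_point_def image_iff intro!: bexI[of _ "(c - 1, int v - h)"])
  next
    fix z assume "z \<in> Q_point v ` Q_set x v"
    then obtain r p where "(r, p) \<in> Q_set x v" "z = diag_point v (r + 1) (int v - p)"
      by (auto simp: Q_point_def)
    moreover have "r + 1 \<noteq> 0" using \<open>(r, p) \<in> Q_set x v\<close> by (simp add: Q_set_def)
    ultimately show "z \<in> P_lambda v (\<lambda>_. int x) - {\<lambda>_. 0}"
      using \<open>v \<ge> 1\<close> diag_point_eq_iff[of v "r + 1" _ 0 0]
      by (auto simp: diag_point_mem_P_lambda_iff[OF assms] diag_point_zero)
  qed
qed

lemma P_le_Q_point_iff:
  assumes "x * v \<ge> 2" and "a \<in> Q_set x v" and "b \<in> Q_set x v"
  shows "P_le v (\<lambda>_. int x) (Q_point v a) (Q_point v b) \<longleftrightarrow> a = b \<or> Q_less a b"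
proof -
  obtain r p r' p' where ab: "a = (r, p)" "b = (r', p')" by fastforce
  have "Q_point v a \<in> P_lambda v (\<lambda>_. int x)" "Q_point v b \<in> P_lambda v (\<lambda>_. int x)"
    using assms P_lambda_const_minus_zero[OF assms(1)] by auto
  moreover have "(\<lambda>j. Q_point v b j - Q_point v a j) = diag_point v (r' - r) (p - p')"
    by (simp add: ab Q_point_def diag_point_diff)
  ultimately have "P_le v (\<lambda>_. int x) (Q_point v a) (Q_point v b) \<longleftrightarrow>
    (r' - r, p - p') = (0, 0) \<or> (r' - r - 1, int v - (p - p')) \<in> Q_set x v"
    by (simp add: P_le_def diag_point_mem_P_lambda_iff[OF assms(1)])
  also have "\<dots> \<longleftrightarrow> a = b \<or> Q_less a b"
    using assms(2,3) by (auto simp: ab Q_set_def Q_less_def)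
  finally show ?thesis .
qed

theorem theorem4p1:
  fixes x v :: nat
  assumes "x \<ge> 1" and "v \<ge> 1" and "x * v \<ge> 3"
  shows "\<exists>f. bij_betw f (P_lambda v (\<lambda>_. int x) - {(\<lambda>_. 0)}) (Q_set x v) \<and>
           (\<forall>\<sigma>\<in>P_lambda v (\<lambda>_. int x) - {(\<lambda>_. 0)}.
            \<forall>\<mu>\<in>P_lambda v (\<lambda>_. int x) - {(\<lambda>_. 0)}.
              P_le v (\<lambda>_. int x) \<sigma> \<mu> \<longleftrightarrow> (f \<sigma> = f \<mu> \<or> Q_less (f \<sigma>) (f \<mu>)))"
proof -
  have xv: "x * v \<ge> 2" using assms(3) by simp
  have "bij_betw (Q_point v) (Q_set x v) (P_lambda v (\<lambda>_. int x) - {\<lambda>_. 0})"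
    unfolding P_lambda_const_minus_zero[OF xv]
    by (rule bij_betw_imageI) (use inj_Q_point[OF assms(2)] inj_on_subset in blast)+
  then show ?thesis
    by (rule ex_rel_iso_inverse) (rule P_le_Q_point_iff[OF xv])
qed

end
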